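(* Let $g:[a,b]\to\mathbb R$ be a derivator and let $M=\{f\in\mathrm{AC}_g([a,b]): f'_g\in L^2_g([a,b])\}$. Then $M\subset\mathrm{UC}_g([a,b])$ and $M$ is dense in $\mathrm{UC}_g([a,b])$ with respect to the supremum norm.
   Context: $\mathbb F\in\{\mathbb R,\mathbb C\}$. A derivator is a nondecreasing, left-continuous $g:[a,b]\to\mathbb R$; $\mu_g$ is its Lebesgue–Stieltjes measure ($\mu_g([c,d))=g(d)-g(c)$). For $x\in[a,b)$, $\Delta g(x)=g(x^+)-g(x)$; $D_g=\{x\in[a,b):\Delta g(x)>0\}$; $C_g=\{x\in[a,b]:g$ is constant on $(x-\delta,x+\delta)\cap[a,b]$ for some $\delta>0\}$, an open set whose connected components are intervals $(a_n,b_n)$. The $g$-derivative of $f$ at $t$ is $f'_g(t)=\lim_{s\to t}\frac{f(s)-f(t)}{g(s)-g(t)}$ if $t\notin D_g\cup C_g$; $f'_g(t)=\lim_{s\to t^+}\frac{f(s)-f(t)}{g(s)-g(t)}$ if $t\in D_g$; $f'_g(t)=\lim_{s\to b_n^+}\frac{f(s)-f(b_n)}{g(s)-g(b_n)}$ if $t\in(a_n,b_n)\subset C_g$; whenever these limits exist. $\mathrm{AC}_g([a,b])$ is the set of $g$-absolutely continuous $F:[a,b]\to\mathbb F$: for every $\varepsilon>0$ there is $\delta>0$ such that for every finite family of pairwise disjoint open subintervals $(a_k,b_k)$ of $[a,b]$, $\sum_k(g(b_k)-g(a_k))<\delta$ implies $\sum_k|F(b_k)-F(a_k)|<\varepsilon$;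 equivalently, $F'_g$ exists $\mu_g$-a.e., is $\mu_g$-integrable, and $F(t)=F(a)+\int_{[a,t)}F'_g\,d\mu_g$ for all $t$. $L^2_g([a,b])$ is the Hilbert space of $\mu_g$-measurable $f$ with $\int_{[a,b)}|f|^2d\mu_g<\infty$. $\mathrm{UC}_g([a,b])$ is the Banach space (supremum norm) of uniformly $g$-continuous functions: for every $\varepsilon>0$ there is $\delta>0$ with $|g(x)-g(y)|<\delta\Rightarrow|f(x)-f(y)|<\varepsilon$. *)

theory Defs
  imports "HOL-Analysis.Analysis"
begin

definition derivator :: "(real \<Rightarrow> real) \<Rightarrow> real \<Rightarrow> real \<Rightarrow> bool" where
  "derivator g a b \<longleftrightarrow> a < b \<and> mono_on {a..b} g \<and>
     (\<forall>x\<in>{a<..b}. (g \<longlongrightarrow> g x) (at_left x))"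

definition g_ext :: "(real \<Rightarrow> real) \<Rightarrow> real \<Rightarrow> real \<Rightarrow> real \<Rightarrow> real" where
  "g_ext g a b x = g (max a (min b x))"

text \<open>Lebesgue--Stieltjes measure of g, with mu_g [c,d) = g d - g c.  Built from the
  library's (right-continuous) interval_measure via the reflection x \<mapsto> -x.\<close>
definition mu_g :: "(real \<Rightarrow> real) \<Rightarrow> real \<Rightarrow> real \<Rightarrow> real measure" where
  "mu_g g a b = distr (interval_measure (\<lambda>x. - g_ext g a b (- x))) borel uminus"

definition Delta_g :: "(real \<Rightarrow> real) \<Rightarrow> real \<Rightarrow> real \<Rightarrow> real \<Rightarrow> real" where
  "Delta_g g a b x = Lim (at_right x) g - g x"

definition D_g :: "(real \<Rightarrow> real) \<Rightarrow> real \<Rightarrow> real \<Rightarrow> real set" where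
  "D_g g a b = {x \<in> {a..<b}. Delta_g g a b x > 0}"

definition C_g :: "(real \<Rightarrow> real) \<Rightarrow> real \<Rightarrow> real \<Rightarrow> real set" where
  "C_g g a b = {x \<in> {a..b}. \<exists>\<delta>>0. \<forall>y\<in>{x-\<delta><..<x+\<delta>} \<inter> {a..b}. g y = g x}"

definition comp_right :: "(real \<Rightarrow> real) \<Rightarrow> real \<Rightarrow> real \<Rightarrow> real \<Rightarrow> real" where
  "comp_right g a b t = Sup (connected_component_set (C_g g a b) t)"

definition has_g_deriv ::
  "(real \<Rightarrow> real) \<Rightarrow> real \<Rightarrow> real \<Rightarrow> (real \<Rightarrow> 'a::real_normed_field) \<Rightarrow> real \<Rightarrow> 'a \<Rightarrow> bool" where
  "has_g_deriv g a b f t L \<longleftrightarrow>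
     (if t \<in> C_g g a b then
        (let c = comp_right g a b t in
         ((\<lambda>s. (f s - f c) / of_real (g s - g c)) \<longlongrightarrow> L)
           (at c within {s\<in>{a..b}. c < s \<and> g s \<noteq> g c}))
      else if t \<in> D_g g a b then
        ((\<lambda>s. (f s - f t) / of_real (g s - g t)) \<longlongrightarrow> L)
           (at t within {s\<in>{a..b}. t < s \<and> g s \<noteq> g t})
      else
        ((\<lambda>s. (f s - f t) / of_real (g s - g t)) \<longlongrightarrow> L)
           (at t within {s\<in>{a..b}. g s \<noteq> g t}))"

definition AC_g :: "(real \<Rightarrow> real) \<Rightarrow> real \<Rightarrow> real \<Rightarrow> (real \<Rightarrow> 'a::real_normed_field) set" where
  "AC_g g a b = {F. \<forall>\<epsilon>>0. \<exists>\<delta>>0. \<forall>(n::nat) (u::nat \<Rightarrow> real) v.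
      (\<forall>k<n. a \<le> u k \<and> u k < v k \<and> v k \<le> b) \<longrightarrow>
      (\<forall>j<n. \<forall>k<n. j \<noteq> k \<longrightarrow> {u j<..<v j} \<inter> {u k<..<v k} = {}) \<longrightarrow>
      (\<Sum>k<n. g (v k) - g (u k)) < \<delta> \<longrightarrow>
      (\<Sum>k<n. norm (F (v k) - F (u k))) < \<epsilon>}"

definition in_L2_g :: "(real \<Rightarrow> real) \<Rightarrow> real \<Rightarrow> real \<Rightarrow> (real \<Rightarrow> 'a::{real_normed_field,banach,second_countable_topology}) \<Rightarrow> bool" where
  "in_L2_g g a b h \<longleftrightarrow> h \<in> borel_measurable (mu_g g a b) \<and>
     set_integrable (mu_g g a b) {a..<b} (\<lambda>x. (norm (h x))\<^sup>2)"

definition g_deriv_in_L2 :: "(real \<Rightarrow> real) \<Rightarrow> real \<Rightarrow> real \<Rightarrow> (real \<Rightarrow> 'a::{real_normed_field,banach,second_countable_topology}) \<Rightarrow> bool" where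
  "g_deriv_in_L2 g a b f \<longleftrightarrow> (\<exists>h. in_L2_g g a b h \<and>
     (AE t in mu_g g a b. t \<in> {a..<b} \<longrightarrow> has_g_deriv g a b f t (h t)))"

definition UC_g :: "(real \<Rightarrow> real) \<Rightarrow> real \<Rightarrow> real \<Rightarrow> (real \<Rightarrow> 'a::real_normed_vector) set" where
  "UC_g g a b = {f. \<forall>\<epsilon>>0. \<exists>\<delta>>0. \<forall>x\<in>{a..b}. \<forall>y\<in>{a..b}.
      \<bar>g x - g y\<bar> < \<delta> \<longrightarrow> norm (f x - f y) < \<epsilon>}"

end

theory Submission
  imports Defs
begin

text \<open>
  Uniform g-continuity of the functions in M is g-absolute continuity tested on single intervals.
  For density, a uniformly g-continuous f is approximated by \<Psi> \<circ> g, where \<Psi> interpolates,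
  on a grid of mesh h in the range of g, values of f taken at points whose g-values lie within h
  of the nodes, joining consecutive nodes by the C^1 smoothstep 3x^2 - 2x^3. As f varies by less
  than epsilon/2 when g varies by less than 3h, \<Psi> (g t) is a convex combination of two values
  that are epsilon/2-close to f t. Since \<Psi> has a bounded derivative, \<Psi> \<circ> g is
  g-absolutely continuous, and by the chain rule its g-derivative off the mu_g-null set C_g is
  \<Psi>' (g t) where g is continuous and the jump quotient (\<Psi> (g (t+)) - \<Psi> (g t)) / \<Delta>g(t)
  on D_g: a bounded Borel function, hence in L^2_g.
\<close>

lemma has_real_derivative_at_split:
  assumes "(f has_real_derivative D) (at x within {..x})"
    and "(f has_real_derivative D) (at x within {x..})"
  shows "(f has_real_derivative D) (at x)"
proof -
  have "(f has_real_derivative D) (at x within {..x} \<union> {x..})"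
    using assms unfolding has_field_derivative_iff by (rule Lim_within_Un[THEN iffD2, OF conjI])
  moreover have "{..x} \<union> {x..} = UNIV"
    by auto
  ultimately show ?thesis
    by simp
qed

lemma lipschitz_if_vector_derivative_bounded:
  assumes "\<And>y. (\<Psi> has_vector_derivative \<Psi>' y) (at y)" "\<And>y. norm (\<Psi>' y) \<le> L"
  shows "L-lipschitz_on UNIV \<Psi>"
proof (rule bounded_derivative_imp_lipschitz)
  show "(\<Psi> has_derivative (\<lambda>h. h *\<^sub>R \<Psi>' y)) (at y within UNIV)" for y
    using assms(1) by (simp add: has_vector_derivative_def)
  show "onorm (\<lambda>h. h *\<^sub>R \<Psi>' y) \<le> L" for y
    using assms(2) by (simp add: onorm_scaleR_left[OF bounded_linear_ident] onorm_id)
  show "0 \<le> L"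
    using norm_ge_zero assms(2) order_trans by blast
qed simp

lemma has_vector_derivative_imp_tendsto_quotient:
  fixes \<Psi> :: "real \<Rightarrow> 'a::real_normed_field"
  assumes "(\<Psi> has_vector_derivative D) (at y)"
  shows "((\<lambda>z. (\<Psi> z - \<Psi> y) / of_real (z - y)) \<longlongrightarrow> D) (at y)"
proof -
  have "((\<lambda>z. norm (\<Psi> z - \<Psi> y - (z - y) *\<^sub>R D) / norm (z - y)) \<longlongrightarrow> 0) (at y)"
    using assms unfolding has_vector_derivative_def has_derivative_iff_norm by simp
  moreover have "norm ((\<Psi> z - \<Psi> y) / of_real (z - y) - D)
      = norm (\<Psi> z - \<Psi> y - (z - y) *\<^sub>R D) / norm (z - y)" if "z \<noteq> y" for z
  proof -
    have "(\<Psi> z - \<Psi> y) / of_real (z - y) - D = (\<Psi> z - \<Psi> y - (z - y) *\<^sub>R D) / of_real (z - y)"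
      using that by (simp add: field_simps scaleR_conv_of_real)
    then show ?thesis
      by (simp add: norm_divide del: of_real_diff)
  qed
  then have "eventually (\<lambda>z. norm (\<Psi> z - \<Psi> y - (z - y) *\<^sub>R D) / norm (z - y)
      = norm ((\<Psi> z - \<Psi> y) / of_real (z - y) - D)) (at y)"
    by (auto simp: eventually_at_filter)
  ultimately have "((\<lambda>z. norm ((\<Psi> z - \<Psi> y) / of_real (z - y) - D)) \<longlongrightarrow> 0) (at y)"
    by (rule Lim_transform_eventually)
  then show ?thesis
    by (simp add: tendsto_norm_zero_iff LIM_zero_iff)
qed

lemma mono_on_tendsto_at_right_Inf:
  fixes g :: "real \<Rightarrow> real"
  assumes "mono_on {a..b} g" "a \<le> t" "t < b"
  shows "(g \<longlongrightarrow> Inf (g ` {t<..b})) (at_right t)"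
proof (rule order_tendstoI)
  fix y assume y: "y < Inf (g ` {t<..b})"
  have bdd: "bdd_below (g ` {t<..b})"
    using assms by (intro bdd_belowI[of _ "g t"]) (auto intro!: mono_onD[OF assms(1)])
  have "y < g x" if "x \<in> {t<..<b}" for x
    using cInf_lower[OF _ bdd, of "g x"] that y by auto
  then show "eventually (\<lambda>x. y < g x) (at_right t)"
    using eventually_at_right_real[OF assms(3)] by (auto elim!: eventually_mono)
next
  fix y assume y: "Inf (g ` {t<..b}) < y"
  have "g ` {t<..b} \<noteq> {}"
    using assms by auto
  then obtain s where s: "s \<in> {t<..b}" "g s < y"
    using cInf_lessD[OF _ y] by blast
  have "g x < y" if "x \<in> {t<..<s}" for x
    using mono_onD[OF assms(1), of x s] that s assms by auto
  then show "eventually (\<lambda>x. g x < y) (at_right t)"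
    using eventually_at_right_real[of t s] s by (auto elim!: eventually_mono)
qed

section \<open>Smooth interpolation\<close>

definition smoothstep :: "real \<Rightarrow> real" where
  "smoothstep x = (if x \<le> 0 then 0 else if 1 \<le> x then 1 else 3*x^2 - 2*x^3)"

definition smoothstep' :: "real \<Rightarrow> real" where
  "smoothstep' x = (if x \<le> 0 then 0 else if 1 \<le> x then 0 else 6*x - 6*x^2)"

lemma smoothstep_bounds: "0 \<le> smoothstep x" "smoothstep x \<le> 1"
proof -
  have "3*x^2 - 2*x^3 = x^2 * (3 - 2*x)" "3*x^2 - 2*x^3 = 1 - (1 - x)^2 * (1 + 2*x)"
    by (simp_all add: power2_eq_square power3_eq_cube algebra_simps)
  moreover have "x < 1 \<Longrightarrow> 0 \<le> x^2 * (3 - 2*x)" "0 < x \<Longrightarrow> 0 \<le> (1 - x)^2 * (1 + 2*x)"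
    by simp_all
  ultimately have "x < 1 \<Longrightarrow> 0 \<le> 3*x^2 - 2*x^3" "0 < x \<Longrightarrow> 3*x^2 - 2*x^3 \<le> 1"
    by linarith+
  then show "0 \<le> smoothstep x" "smoothstep x \<le> 1"
    by (simp_all add: smoothstep_def)
qed

lemma smoothstep'_bounds: "0 \<le> smoothstep' x" "smoothstep' x \<le> 2"
proof -
  have "6*x - 6*x^2 = 6*x*(1 - x)" "6*x - 6*x^2 = 3/2 - 3/2*(2*x - 1)^2"
    by (simp_all add: power2_eq_square algebra_simps)
  moreover have "0 < x \<Longrightarrow> x < 1 \<Longrightarrow> 0 \<le> 6*x*(1 - x)" "0 \<le> (2*x - 1)^2"
    by simp_all
  ultimately have "0 < x \<Longrightarrow> x < 1 \<Longrightarrow> 0 \<le> 6*x - 6*x^2" "6*x - 6*x^2 \<le> 2"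
    by linarith+
  then show "0 \<le> smoothstep' x" "smoothstep' x \<le> 2"
    by (simp_all add: smoothstep'_def)
qed

lemma smoothstep_has_real_derivative: "(smoothstep has_real_derivative smoothstep' x) (at x)"
proof -
  define P :: "real \<Rightarrow> real" where "P x = 3*x^2 - 2*x^3" for x
  have P': "(P has_real_derivative smoothstep' x) (at x within S)" if "0 \<le> x" "x \<le> 1" for x S
  proof -
    have "smoothstep' x = 6*x - 6*x^2"
      using that by (cases "x = 0 \<or> x = 1") (auto simp: smoothstep'_def)
    then show ?thesis
      unfolding P_def by (auto intro!: derivative_eq_intros simp: power2_eq_square)
  qed
  have on_unit: "smoothstep y = P y" if "0 \<le> y" "y \<le> 1" for y
    using that by (cases "y = 1") (auto simp: smoothstep_def P_def)
  have const: "((\<lambda>_. c) has_real_derivative smoothstep' x) (at x within S)"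
    if "x \<le> 0 \<or> 1 \<le> x" for c x S
    using that by (auto simp: smoothstep'_def)
  \<comment> \<open>P' vanishes at 0 and 1, so the one-sided derivatives agree at the junctions\<close>
  consider "x < 0" | "x = 0" | "0 < x \<and> x < 1" | "x = 1" | "1 < x" by linarith
  then show ?thesis
  proof cases
    case 1
    show ?thesis
      by (rule has_field_derivative_transform_within_open[OF const[where c=0], where S="{..<0}"])
        (use 1 in \<open>auto simp: smoothstep_def\<close>)
  next
    case 2
    show ?thesis
    proof (rule has_real_derivative_at_split)
      show "(smoothstep has_real_derivative smoothstep' x) (at x within {..x})"
        by (rule has_field_derivative_transform_within[OF const[where c=0] zero_less_one])
          (use 2 in \<open>auto simp: smoothstep_def\<close>)
      show "(smoothstep has_real_derivative smoothstep' x) (at x within {x..})"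
        by (rule has_field_derivative_transform_within[OF P' zero_less_one])
          (use 2 in \<open>auto simp: on_unit dist_real_def\<close>)
    qed
  next
    case 3
    show ?thesis
      by (rule has_field_derivative_transform_within_open[OF P', where S="{0<..<1}"])
        (use 3 in \<open>auto simp: on_unit\<close>)
  next
    case 4
    show ?thesis
    proof (rule has_real_derivative_at_split)
      show "(smoothstep has_real_derivative smoothstep' x) (at x within {..x})"
        by (rule has_field_derivative_transform_within[OF P' zero_less_one])
          (use 4 in \<open>auto simp: on_unit dist_real_def\<close>)
      show "(smoothstep has_real_derivative smoothstep' x) (at x within {x..})"
        by (rule has_field_derivative_transform_within[OF const[where c=1] zero_less_one])
          (use 4 in \<open>auto simp: smoothstep_def\<close>)
    qed
  next
    case 5
    show ?thesis
      by (rule has_field_derivative_transform_within_open[OF const[where c=1], where S="{1<..}"])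
        (use 5 in \<open>auto simp: smoothstep_def\<close>)
  qed
qed

lemma smoothstep'_measurable [measurable]: "smoothstep' \<in> borel_measurable borel"
  unfolding smoothstep'_def by measurable

text \<open>A telescoping sum of smoothsteps: between the nodes y0 + k h and y0 + (k + 1) h only the
  k-th summand varies, so the interpolant runs from v k to v (k + 1) there.\<close>

definition smooth_interp ::
  "real \<Rightarrow> real \<Rightarrow> nat \<Rightarrow> (nat \<Rightarrow> 'a::real_normed_vector) \<Rightarrow> real \<Rightarrow> 'a" where
  "smooth_interp y0 h N v y =
     v 0 + (\<Sum>j<N. smoothstep ((y - y0) / h - real j) *\<^sub>R (v (Suc j) - v j))"

definition smooth_interp' ::
  "real \<Rightarrow> real \<Rightarrow> nat \<Rightarrow> (nat \<Rightarrow> 'a::real_normed_vector) \<Rightarrow> real \<Rightarrow> 'a" where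
  "smooth_interp' y0 h N v y =
     (\<Sum>j<N. (smoothstep' ((y - y0) / h - real j) / h) *\<^sub>R (v (Suc j) - v j))"

lemma smooth_interp_has_vector_derivative:
  "(smooth_interp y0 h N v has_vector_derivative smooth_interp' y0 h N v y) (at y)"
proof -
  have "((\<lambda>y. (y - y0) / h - real j) has_real_derivative 1 / h) (at y)" for j
    unfolding divide_inverse by (auto intro!: derivative_eq_intros)
  from DERIV_chain2[OF smoothstep_has_real_derivative this]
  have "((\<lambda>y. smoothstep ((y - y0) / h - real j)) has_real_derivative
      smoothstep' ((y - y0) / h - real j) / h) (at y)" for j
    by simp
  then show ?thesis
    unfolding smooth_interp_def smooth_interp'_def
    by (auto intro!: derivative_eq_intros)
qed

lemma smooth_interp'_measurable [measurable]:
  "smooth_interp' y0 h N (v :: nat \<Rightarrow> 'a::{real_normed_vector, second_countable_topology})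
    \<in> borel_measurable borel"
  unfolding smooth_interp'_def by measurable

lemma norm_smooth_interp'_le:
  assumes "h > 0"
  shows "norm (smooth_interp' y0 h N v y) \<le> (\<Sum>j<N. 2 / h * norm (v (Suc j) - v j))"
  unfolding smooth_interp'_def
proof (rule order_trans[OF norm_sum sum_mono])
  fix j
  have "\<bar>smoothstep' ((y - y0) / h - real j) / h\<bar> \<le> 2 / h"
    using smoothstep'_bounds assms by (simp add: divide_right_mono)
  then show "norm ((smoothstep' ((y - y0) / h - real j) / h) *\<^sub>R (v (Suc j) - v j))
      \<le> 2 / h * norm (v (Suc j) - v j)"
    unfolding norm_scaleR by (rule mult_right_mono) simp
qed

lemma smooth_interp_between:
  assumes "h > 0" "k < N" "y0 + real k * h \<le> y" "y \<le> y0 + real (Suc k) * h"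
  shows "smooth_interp y0 h N v y =
    v k + smoothstep ((y - y0) / h - real k) *\<^sub>R (v (Suc k) - v k)"
proof -
  define q where "q = (y - y0) / h"
  have q: "real k \<le> q" "q \<le> real k + 1"
    using assms by (simp_all add: q_def field_simps)
  have lower: "smoothstep (q - real j) = 1" if "j < k" for j
    using q that by (simp add: smoothstep_def)
  have upper: "smoothstep (q - real j) = 0" if "Suc k \<le> j" for j
    using q that by (simp add: smoothstep_def)
  have split: "{..<N} = {..<Suc k} \<union> {Suc k..<N}"
    using assms(2) by auto
  have "(\<Sum>j<N. smoothstep (q - real j) *\<^sub>R (v (Suc j) - v j))
      = (\<Sum>j<Suc k. smoothstep (q - real j) *\<^sub>R (v (Suc j) - v j))"
    unfolding split by (subst sum.union_disjoint) (auto simp: upper)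
  also have "\<dots> = (\<Sum>j<k. v (Suc j) - v j) + smoothstep (q - real k) *\<^sub>R (v (Suc k) - v k)"
    by (simp add: lower)
  finally show ?thesis
    unfolding smooth_interp_def q_def[symmetric] sum_lessThan_telescope by simp
qed

lemma norm_diff_smooth_interp_le:
  assumes "h > 0" "k < N" "y0 + real k * h \<le> y" "y \<le> y0 + real (Suc k) * h"
    and "norm (w - v k) \<le> e" "norm (w - v (Suc k)) \<le> e"
  shows "norm (w - smooth_interp y0 h N v y) \<le> e"
proof -
  define \<theta> where "\<theta> = smoothstep ((y - y0) / h - real k)"
  have \<theta>: "0 \<le> \<theta>" "\<theta> \<le> 1"
    unfolding \<theta>_def by (rule smoothstep_bounds)+
  have "w - smooth_interp y0 h N v y = (1 - \<theta>) *\<^sub>R (w - v k) + \<theta> *\<^sub>R (w - v (Suc k))"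
    unfolding smooth_interp_between[OF assms(1-4)] \<theta>_def[symmetric] by (simp add: algebra_simps)
  also have "norm \<dots> \<le> (1 - \<theta>) * e + \<theta> * e"
    using \<theta> assms(5,6) by (intro norm_triangle_le add_mono) (simp_all add: mult_left_mono)
  finally show ?thesis
    by (simp add: algebra_simps)
qed

section \<open>Derivators and their Lebesgue-Stieltjes measure\<close>

lemma derivatorD:
  assumes "derivator g a b"
  shows "a < b" "mono_on {a..b} g" "\<And>x. x \<in> {a<..b} \<Longrightarrow> (g \<longlongrightarrow> g x) (at_left x)"
  using assms unfolding derivator_def by auto

lemma g_ext_eq: "x \<in> {a..b} \<Longrightarrow> g_ext g a b x = g x"
  unfolding g_ext_def by (cases "x = b") (auto simp: max_def min_def)

lemma mono_g_ext:
  assumes "derivator g a b"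
  shows "mono (g_ext g a b)"
proof (rule monoI)
  fix x y :: real
  assume "x \<le> y"
  then show "g_ext g a b x \<le> g_ext g a b y"
    unfolding g_ext_def using derivatorD[OF assms]
    by (intro mono_onD[of "{a..b}" g]) auto
qed

lemma g_ext_tendsto_at_left:
  assumes "derivator g a b"
  shows "(g_ext g a b \<longlongrightarrow> g_ext g a b y) (at_left y)"
proof -
  have ab: "a < b" using derivatorD[OF assms] by auto
  consider "y \<le> a" | "a < y \<and> y \<le> b" | "b < y" by linarith
  then show ?thesis
  proof cases
    case 1
    have "eventually (\<lambda>x. g_ext g a b x = g_ext g a b y) (at_left y)"
      using eventually_at_left_real[of "y - 1" y] 1 ab
      by (auto simp: g_ext_def elim!: eventually_mono)
    then show ?thesis by (simp add: tendsto_eventually)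
  next
    case 2
    have "eventually (\<lambda>x. g_ext g a b x = g x) (at_left y)"
      using eventually_at_left_real[of a y] 2
      by (auto simp: g_ext_eq elim!: eventually_mono)
    moreover have "(g \<longlongrightarrow> g y) (at_left y)"
      using derivatorD(3)[OF assms] 2 by auto
    ultimately show ?thesis
      using 2 tendsto_cong by (fastforce simp: g_ext_eq)
  next
    case 3
    have "eventually (\<lambda>x. g_ext g a b x = g_ext g a b y) (at_left y)"
      using eventually_at_left_real[of b y] 3 ab
      by (auto simp: g_ext_def elim!: eventually_mono)
    then show ?thesis by (simp add: tendsto_eventually)
  qed
qed

lemma sets_mu_g [measurable_cong]: "sets (mu_g g a b) = sets borel"
  by (simp add: mu_g_def)

lemma emeasure_mu_g_Ico:
  assumes "derivator g a b" "c \<le> d"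
  shows "emeasure (mu_g g a b) {c..<d} = ennreal (g_ext g a b d - g_ext g a b c)"
proof -
  let ?G = "g_ext g a b"
  let ?F = "\<lambda>x. - ?G (- x)"
  have "?F x \<le> ?F y" if "x \<le> y" for x y
    using monoD[OF mono_g_ext[OF assms(1)], of "-y" "-x"] that by simp
  moreover have "continuous (at_right x) ?F" for x
  proof -
    have "((\<lambda>z. ?G (- z)) \<longlongrightarrow> ?G (- x)) (at_right x)"
      using g_ext_tendsto_at_left[OF assms(1), of "- x"]
      unfolding filterlim_at_left_to_right[of _ _ "- x"] by simp
    then show ?thesis
      unfolding continuous_within by (intro tendsto_minus)
  qed
  ultimately have "emeasure (interval_measure ?F) {-d<..-c} = ennreal (?F (-c) - ?F (-d))"
    using assms(2) by (intro emeasure_interval_measure_Ioc) auto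
  moreover have "uminus -` {c..<d} = {-d<..-c}"
    by auto
  ultimately show ?thesis
    unfolding mu_g_def by (subst emeasure_distr) auto
qed

text \<open>C_g \<inter> [a,b) is covered by the countably many intervals [c,d) with g c = g d, d rational
  and c rational or equal to a; each of them is mu_g-null.\<close>

lemma AE_not_in_C_g:
  assumes "derivator g a b"
  shows "AE t in mu_g g a b. t \<in> {a..<b} \<longrightarrow> t \<notin> C_g g a b"
proof -
  define I where "I = (insert a \<rat>) \<times> (\<rat>::real set)"
  define P where "P = (\<lambda>(c, d).
    if a \<le> c \<and> c \<le> d \<and> d \<le> b \<and> g c = g d then {c..<d} else ({} :: real set))"
  have "P i \<in> null_sets (mu_g g a b)" for i
  proof (cases i)
    case (Pair c d)
    show ?thesis
    proof (cases "a \<le> c \<and> c \<le> d \<and> d \<le> b \<and> g c = g d")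
      case True
      then have "emeasure (mu_g g a b) {c..<d} = 0"
        using emeasure_mu_g_Ico[OF assms, of c d] by (simp add: g_ext_eq)
      then show ?thesis using True Pair by (auto simp: P_def intro!: null_setsI)
    qed (auto simp: P_def Pair)
  qed
  moreover have "countable I"
    unfolding I_def using countable_rat by (intro countable_SIGMA) auto
  ultimately have null: "(\<Union>i\<in>I. P i) \<in> null_sets (mu_g g a b)"
    by (intro null_sets_UN') auto
  have cover: "t \<in> (\<Union>i\<in>I. P i)" if t: "t \<in> C_g g a b" "t \<in> {a..<b}" for t
  proof -
    obtain \<delta> where d0: "\<delta> > 0" and cst: "\<forall>y\<in>{t-\<delta><..<t+\<delta>} \<inter> {a..b}. g y = g t"
      using t by (auto simp: C_g_def)
    obtain d where d: "d \<in> \<rat>" "t < d" "d < min (t+\<delta>) b"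
      using Rats_dense_in_real[of t "min (t+\<delta>) b"] t d0 by auto
    obtain c where c: "c \<in> insert a \<rat>" "a \<le> c" "c \<le> t" "t - \<delta> < c"
    proof (cases "t = a")
      case True
      then show ?thesis using that[of a] d0 by auto
    next
      case False
      then obtain c where "c \<in> \<rat>" "max a (t - \<delta>) < c" "c < t"
        using Rats_dense_in_real[of "max a (t - \<delta>)" t] t d0 by auto
      then show ?thesis using that[of c] by auto
    qed
    have "g c = g t" "g d = g t"
      using c d t d0 by (auto intro!: cst[rule_format])
    then have "t \<in> P (c, d)"
      using c d t by (auto simp: P_def)
    moreover have "(c, d) \<in> I"
      using c d by (auto simp: I_def)
    ultimately show ?thesis by blast
  qed
  show ?thesis
    by (rule AE_I'[OF null]) (auto dest: cover)
qed

lemma derivator_tendsto_at_right: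
  assumes "derivator g a b" "a \<le> t" "t < b"
  shows "(g \<longlongrightarrow> Lim (at_right t) g) (at_right t)" "g t \<le> Lim (at_right t) g"
proof -
  have mono: "mono_on {a..b} g"
    using derivatorD[OF assms(1)] by auto
  note lim = mono_on_tendsto_at_right_Inf[OF mono assms(2,3)]
  then have Lim: "Lim (at_right t) g = Inf (g ` {t<..b})"
    by (intro tendsto_Lim) auto
  show "(g \<longlongrightarrow> Lim (at_right t) g) (at_right t)"
    using lim unfolding Lim .
  show "g t \<le> Lim (at_right t) g"
    unfolding Lim using assms by (intro cINF_greatest) (auto intro!: mono_onD[OF mono])
qed

lemma derivator_tendsto_off_D_g:
  assumes "derivator g a b" "t \<in> {a..<b}" "t \<notin> D_g g a b"
  shows "(g \<longlongrightarrow> g t) (at t within {a..b})"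
proof -
  have tab: "a \<le> t" "t < b"
    using assms(2) by auto
  note right_lim = derivator_tendsto_at_right[OF assms(1) tab]
  have "Lim (at_right t) g = g t"
    using assms(3) right_lim(2) tab by (simp add: D_g_def Delta_g_def)
  then have right: "(g \<longlongrightarrow> g t) (at_right t)"
    using right_lim(1) by simp
  show ?thesis
  proof (cases "t = a")
    case True
    then show ?thesis
      using right at_within_Icc_at_right[OF tab(2)] by simp
  next
    case False
    then have "a < t"
      using tab by simp
    then have "(g \<longlongrightarrow> g t) (at_left t)"
      using derivatorD(3)[OF assms(1)] tab by auto
    then have "(g \<longlongrightarrow> g t) (at t)"
      using right by (rule filterlim_split_at)
    then show ?thesis
      using at_within_Icc_at[OF \<open>a < t\<close> tab(2)] by simp
  qed
qed

lemma countable_D_g: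
  assumes "derivator g a b"
  shows "countable (D_g g a b)"
proof -
  have "D_g g a b \<subseteq> {x\<in>{a..b}. \<not> continuous (at x within {a..b}) g}"
  proof
    fix t assume t: "t \<in> D_g g a b"
    then have tab: "a \<le> t" "t < b" and jump: "Lim (at_right t) g \<noteq> g t"
      by (auto simp: D_g_def Delta_g_def)
    have "\<not> continuous (at t within {a..b}) g"
    proof
      assume "continuous (at t within {a..b}) g"
      then have "(g \<longlongrightarrow> g t) (at t within {t..b})"
        unfolding continuous_within by (rule tendsto_within_subset) (use tab in auto)
      then have "(g \<longlongrightarrow> g t) (at_right t)"
        using at_within_Icc_at_right[OF tab(2)] by simp
      then show False
        using jump tendsto_Lim[of "at_right t" g "g t"] by simp
    qed
    then show "t \<in> {x\<in>{a..b}. \<not> continuous (at x within {a..b}) g}"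
      using tab by auto
  qed
  then show ?thesis
    using mono_on_ctble_discont[OF derivatorD(2)[OF assms]] countable_subset by blast
qed

section \<open>g-absolute continuity\<close>

lemma AC_g_subset_UC_g:
  assumes "mono_on {a..b} g"
  shows "AC_g g a b \<subseteq> UC_g g a b"
proof
  fix F assume F: "F \<in> AC_g g a b"
  show "F \<in> UC_g g a b"
    unfolding UC_g_def
  proof (intro CollectI allI impI)
    fix \<epsilon> :: real assume "\<epsilon> > 0"
    then obtain \<delta> where "\<delta> > 0" and ac: "\<forall>(n::nat) (u::nat \<Rightarrow> real) v.
        (\<forall>k<n. a \<le> u k \<and> u k < v k \<and> v k \<le> b) \<longrightarrow>
        (\<forall>j<n. \<forall>k<n. j \<noteq> k \<longrightarrow> {u j<..<v j} \<inter> {u k<..<v k} = {}) \<longrightarrow>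
        (\<Sum>k<n. g (v k) - g (u k)) < \<delta> \<longrightarrow>
        (\<Sum>k<n. norm (F (v k) - F (u k))) < \<epsilon>"
      using F unfolding AC_g_def by blast
    have ordered: "norm (F y - F x) < \<epsilon>"
      if "x \<in> {a..b}" "y \<in> {a..b}" "x < y" "g y - g x < \<delta>" for x y
      using ac[rule_format, of 1 "\<lambda>_. x" "\<lambda>_. y"] that by auto
    have "norm (F x - F y) < \<epsilon>" if "x \<in> {a..b}" "y \<in> {a..b}" "\<bar>g x - g y\<bar> < \<delta>" for x y
    proof (cases x y rule: linorder_cases)
      case less
      then show ?thesis
        using ordered[of x y] that mono_onD[OF assms, of x y] by (simp add: norm_minus_commute)
    next
      case greater
      then show ?thesis
        using ordered[of y x] that mono_onD[OF assms, of y x] by simp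
    qed (use \<open>\<epsilon> > 0\<close> in simp)
    with \<open>\<delta> > 0\<close>
    show "\<exists>\<delta>>0. \<forall>x\<in>{a..b}. \<forall>y\<in>{a..b}. \<bar>g x - g y\<bar> < \<delta> \<longrightarrow> norm (F x - F y) < \<epsilon>"
      by blast
  qed
qed

lemma lipschitz_comp_in_AC_g:
  fixes \<Psi> :: "real \<Rightarrow> 'a::real_normed_field"
  assumes "mono_on {a..b} g" "L-lipschitz_on UNIV \<Psi>"
  shows "(\<lambda>t. \<Psi> (g t)) \<in> AC_g g a b"
  unfolding AC_g_def
proof (intro CollectI allI impI)
  fix \<epsilon> :: real assume "\<epsilon> > 0"
  have L: "L \<ge> 0" and lip: "norm (\<Psi> x - \<Psi> y) \<le> L * \<bar>x - y\<bar>" for x y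
    using lipschitz_on_nonneg[OF assms(2)] lipschitz_onD[OF assms(2), of x y]
    by (auto simp: dist_norm)
  show "\<exists>\<delta>>0. \<forall>(n::nat) (u::nat \<Rightarrow> real) v.
      (\<forall>k<n. a \<le> u k \<and> u k < v k \<and> v k \<le> b) \<longrightarrow>
      (\<forall>j<n. \<forall>k<n. j \<noteq> k \<longrightarrow> {u j<..<v j} \<inter> {u k<..<v k} = {}) \<longrightarrow>
      (\<Sum>k<n. g (v k) - g (u k)) < \<delta> \<longrightarrow>
      (\<Sum>k<n. norm (\<Psi> (g (v k)) - \<Psi> (g (u k)))) < \<epsilon>"
  proof (intro exI[of _ "\<epsilon> / (L + 1)"] conjI allI impI)
    show "\<epsilon> / (L + 1) > 0"
      using \<open>\<epsilon> > 0\<close> L by simp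
    fix n :: nat and u v :: "nat \<Rightarrow> real"
    assume uv: "\<forall>k<n. a \<le> u k \<and> u k < v k \<and> v k \<le> b"
      and small: "(\<Sum>k<n. g (v k) - g (u k)) < \<epsilon> / (L + 1)"
    have "(\<Sum>k<n. norm (\<Psi> (g (v k)) - \<Psi> (g (u k)))) \<le> (\<Sum>k<n. L * (g (v k) - g (u k)))"
    proof (rule sum_mono)
      fix k assume "k \<in> {..<n}"
      then have "g (u k) \<le> g (v k)"
        using uv mono_onD[OF assms(1), of "u k" "v k"] by auto
      then show "norm (\<Psi> (g (v k)) - \<Psi> (g (u k))) \<le> L * (g (v k) - g (u k))"
        using lip[of "g (v k)" "g (u k)"] by simp
    qed
    also have "\<dots> = L * (\<Sum>k<n. g (v k) - g (u k))"
      by (simp add: sum_distrib_left)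
    also have "\<dots> \<le> L * (\<epsilon> / (L + 1))"
      using small L by (intro mult_left_mono) auto
    also have "\<dots> < \<epsilon>"
      using \<open>\<epsilon> > 0\<close> L by (simp add: field_simps)
    finally show "(\<Sum>k<n. norm (\<Psi> (g (v k)) - \<Psi> (g (u k)))) < \<epsilon>" .
  qed
qed

section \<open>The chain rule for g-derivatives\<close>

text \<open>\<Psi>' is evaluated at g_ext rather than g so that the function is Borel measurable on the
  whole real line; on [a,b] the two agree.\<close>

definition g_chain_deriv ::
  "(real \<Rightarrow> real) \<Rightarrow> real \<Rightarrow> real \<Rightarrow> (real \<Rightarrow> 'a::real_normed_field) \<Rightarrow> (real \<Rightarrow> 'a) \<Rightarrow>
    real \<Rightarrow> 'a" where
  "g_chain_deriv g a b \<Psi> \<Psi>' t =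
     (if t \<in> D_g g a b
      then (\<Psi> (Lim (at_right t) g) - \<Psi> (g t)) / of_real (Lim (at_right t) g - g t)
      else \<Psi>' (g_ext g a b t))"

lemma has_g_deriv_comp:
  fixes \<Psi> :: "real \<Rightarrow> 'a::real_normed_field"
  assumes der: "derivator g a b" and \<Psi>: "\<And>y. (\<Psi> has_vector_derivative \<Psi>' y) (at y)"
    and t: "t \<in> {a..<b}" "t \<notin> C_g g a b"
  shows "has_g_deriv g a b (\<lambda>t. \<Psi> (g t)) t (g_chain_deriv g a b \<Psi> \<Psi>' t)"
proof (cases "t \<in> D_g g a b")
  case True
  let ?L = "Lim (at_right t) g"
  let ?S = "{s\<in>{a..b}. t < s \<and> g s \<noteq> g t}"
  have "(g \<longlongrightarrow> ?L) (at_right t)"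
    using derivator_tendsto_at_right(1)[OF der] t by simp
  then have lim: "(g \<longlongrightarrow> ?L) (at t within ?S)"
    by (rule tendsto_within_subset) auto
  have "isCont \<Psi> ?L"
    using \<Psi> by (rule has_vector_derivative_continuous)
  then have "((\<lambda>s. \<Psi> (g s)) \<longlongrightarrow> \<Psi> ?L) (at t within ?S)"
    using lim by (rule isCont_tendsto_compose)
  then have "((\<lambda>s. \<Psi> (g s) - \<Psi> (g t)) \<longlongrightarrow> \<Psi> ?L - \<Psi> (g t)) (at t within ?S)"
    by (rule tendsto_diff[OF _ tendsto_const])
  moreover have "((\<lambda>s. of_real (g s - g t) :: 'a) \<longlongrightarrow> of_real (?L - g t)) (at t within ?S)"
    using lim by (intro tendsto_of_real tendsto_diff tendsto_const)
  moreover have "of_real (?L - g t) \<noteq> (0 :: 'a)"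
    using True by (simp add: D_g_def Delta_g_def)
  ultimately have "((\<lambda>s. (\<Psi> (g s) - \<Psi> (g t)) / of_real (g s - g t))
      \<longlongrightarrow> (\<Psi> ?L - \<Psi> (g t)) / of_real (?L - g t)) (at t within ?S)"
    by (rule tendsto_divide)
  then show ?thesis
    using True t by (simp add: has_g_deriv_def g_chain_deriv_def)
next
  case False
  let ?S = "{s\<in>{a..b}. g s \<noteq> g t}"
  have "(g \<longlongrightarrow> g t) (at t within ?S)"
    using derivator_tendsto_off_D_g[OF der t(1) False] by (rule tendsto_within_subset) auto
  moreover have "eventually (\<lambda>s. g s \<noteq> g t) (at t within ?S)"
    by (auto simp: eventually_at_filter)
  ultimately have "filterlim g (at (g t)) (at t within ?S)"
    by (rule filterlim_atI)
  from filterlim_compose[OF has_vector_derivative_imp_tendsto_quotient[OF \<Psi>] this]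
  have "((\<lambda>s. (\<Psi> (g s) - \<Psi> (g t)) / of_real (g s - g t)) \<longlongrightarrow> \<Psi>' (g t)) (at t within ?S)"
    by simp
  then show ?thesis
    using False t by (simp add: has_g_deriv_def g_chain_deriv_def g_ext_eq)
qed

lemma norm_g_chain_deriv_le:
  fixes \<Psi> :: "real \<Rightarrow> 'a::real_normed_field"
  assumes "L-lipschitz_on UNIV \<Psi>" "\<And>y. norm (\<Psi>' y) \<le> L"
  shows "norm (g_chain_deriv g a b \<Psi> \<Psi>' t) \<le> L"
proof (cases "t \<in> D_g g a b")
  case True
  define d where "d = Lim (at_right t) g - g t"
  have "norm (\<Psi> (Lim (at_right t) g) - \<Psi> (g t)) \<le> L * \<bar>d\<bar>"
    using lipschitz_onD[OF assms(1)] by (simp add: d_def dist_norm)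
  then show ?thesis
    using True lipschitz_on_nonneg[OF assms(1)]
    by (cases "d = 0") (auto simp: g_chain_deriv_def d_def[symmetric] norm_divide divide_le_eq)
qed (simp add: g_chain_deriv_def assms(2))

lemma g_chain_deriv_measurable:
  assumes "derivator g a b" "\<Psi>' \<in> borel_measurable borel"
  shows "g_chain_deriv g a b \<Psi> \<Psi>' \<in> borel_measurable borel"
proof (rule measurable_discrete_difference[OF _ countable_D_g[OF assms(1)]])
  show "(\<lambda>t. \<Psi>' (g_ext g a b t)) \<in> borel_measurable borel"
    using measurable_compose[OF borel_measurable_mono[OF mono_g_ext[OF assms(1)]] assms(2)]
    by (simp add: o_def)
qed (auto simp: g_chain_deriv_def)

lemma in_L2_g_if_bounded:
  fixes h :: "real \<Rightarrow> 'a::{real_normed_field,banach,second_countable_topology}"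
  assumes "derivator g a b" "h \<in> borel_measurable borel" "\<And>t. norm (h t) \<le> B"
  shows "in_L2_g g a b h"
  unfolding in_L2_g_def set_integrable_def
proof (intro conjI integrableI_bounded_set_indicator[where B="B\<^sup>2"])
  show h: "h \<in> borel_measurable (mu_g g a b)"
    using assms(2) by (simp add: measurable_cong_sets[OF sets_mu_g refl])
  then show "(\<lambda>x. (norm (h x))\<^sup>2) \<in> borel_measurable (mu_g g a b)"
    by measurable
  show "emeasure (mu_g g a b) {a..<b} < \<infinity>"
    using derivatorD(1)[OF assms(1)] by (simp add: emeasure_mu_g_Ico[OF assms(1)])
  show "AE x in mu_g g a b. x \<in> {a..<b} \<longrightarrow> norm ((norm (h x))\<^sup>2) \<le> B\<^sup>2"
    using assms(3) by (auto intro!: power_mono)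
qed simp

lemma g_deriv_in_L2_comp:
  fixes \<Psi> :: "real \<Rightarrow> 'a::{real_normed_field,banach,second_countable_topology}"
  assumes der: "derivator g a b" and \<Psi>: "\<And>y. (\<Psi> has_vector_derivative \<Psi>' y) (at y)"
    and bound: "\<And>y. norm (\<Psi>' y) \<le> L" and meas: "\<Psi>' \<in> borel_measurable borel"
  shows "g_deriv_in_L2 g a b (\<lambda>t. \<Psi> (g t))"
  unfolding g_deriv_in_L2_def
proof (intro exI conjI)
  show "in_L2_g g a b (g_chain_deriv g a b \<Psi> \<Psi>')"
    using der g_chain_deriv_measurable[OF der meas]
      norm_g_chain_deriv_le[OF lipschitz_if_vector_derivative_bounded[OF \<Psi> bound] bound]
    by (rule in_L2_g_if_bounded)
  show "AE t in mu_g g a b. t \<in> {a..<b} \<longrightarrow>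
      has_g_deriv g a b (\<lambda>t. \<Psi> (g t)) t (g_chain_deriv g a b \<Psi> \<Psi>' t)"
    using AE_not_in_C_g[OF der] by eventually_elim (auto intro: has_g_deriv_comp[OF der \<Psi>])
qed

section \<open>Density\<close>

lemma UC_g_approx_by_smooth_comp:
  fixes f :: "real \<Rightarrow> 'a::{real_normed_vector, second_countable_topology}"
  assumes mono: "mono_on {a..b} g" and f: "f \<in> UC_g g a b" and "\<epsilon> > 0"
  obtains \<Psi> \<Psi>' L
  where "\<And>y. (\<Psi> has_vector_derivative \<Psi>' y) (at y)" "\<And>y. norm (\<Psi>' y) \<le> L"
    and "\<Psi>' \<in> borel_measurable borel"
    and "\<And>t. t \<in> {a..b} \<Longrightarrow> norm (f t - \<Psi> (g t)) < \<epsilon>"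
proof -
  obtain \<delta> where "\<delta> > 0"
    and \<delta>: "\<forall>x\<in>{a..b}. \<forall>y\<in>{a..b}. \<bar>g x - g y\<bar> < \<delta> \<longrightarrow> norm (f x - f y) < \<epsilon>/2"
    using f half_gt_zero[OF \<open>\<epsilon> > 0\<close>] unfolding UC_g_def by blast
  define h where "h = \<delta> / 3"
  define N where "N = nat \<lceil>(g b - g a) / h\<rceil> + 1"
  \<comment> \<open>nodes whose h-neighbourhood misses g ` {a..b} get an arbitrary value, which is never used\<close>
  define s where "s j = (SOME s. s \<in> {a..b} \<and> \<bar>g s - (g a + real j * h)\<bar> \<le> h)" for j
  define v where "v j = f (s j)" for j
  have h: "h > 0"
    using \<open>\<delta> > 0\<close> by (simp add: h_def)
  have node: "norm (f t - v j) < \<epsilon>/2"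
    if t: "t \<in> {a..b}" "\<bar>g t - (g a + real j * h)\<bar> \<le> h" for t j
  proof -
    have "\<exists>s. s \<in> {a..b} \<and> \<bar>g s - (g a + real j * h)\<bar> \<le> h"
      using t by blast
    then have sj: "s j \<in> {a..b} \<and> \<bar>g (s j) - (g a + real j * h)\<bar> \<le> h"
      unfolding s_def by (rule someI_ex)
    then have "\<bar>g t - g (s j)\<bar> < \<delta>"
      using sj t(2) \<open>\<delta> > 0\<close> unfolding h_def by linarith
    then show ?thesis
      using \<delta> t(1) sj unfolding v_def by blast
  qed
  have interp: "norm (f t - smooth_interp (g a) h N v (g t)) < \<epsilon>" if t: "t \<in> {a..b}" for t
  proof -
    define q where "q = (g t - g a) / h"
    define k where "k = nat \<lfloor>q\<rfloor>"
    have "g a \<le> g t" "g t \<le> g b"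
      using t by (auto intro!: mono_onD[OF mono])
    then have "0 \<le> q" "q \<le> (g b - g a) / h"
      using h unfolding q_def by (simp_all add: divide_right_mono)
    then have k: "real k \<le> q" "q < real k + 1" "k < N"
      unfolding k_def N_def by linarith+
    then have between: "g a + real k * h \<le> g t" "g t \<le> g a + real (Suc k) * h"
      using h unfolding q_def by (simp_all add: field_simps)
    then have "norm (f t - v k) < \<epsilon>/2" "norm (f t - v (Suc k)) < \<epsilon>/2"
      by (intro node[OF t]; simp add: abs_le_iff algebra_simps)+
    then have "norm (f t - smooth_interp (g a) h N v (g t)) \<le> \<epsilon>/2"
      using between by (intro norm_diff_smooth_interp_le[OF h \<open>k < N\<close>]) auto
    then show ?thesis
      using \<open>\<epsilon> > 0\<close> by linarith
  qed
  show ?thesis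
    by (rule that[OF smooth_interp_has_vector_derivative norm_smooth_interp'_le[OF h]
          smooth_interp'_measurable interp])
qed

theorem mainTheorem6:
  fixes g :: "real \<Rightarrow> real" and a b :: real
  assumes "derivator g a b"
  defines "M \<equiv> {f :: real \<Rightarrow> 'a::{real_normed_field,banach,second_countable_topology}.
                  f \<in> AC_g g a b \<and> g_deriv_in_L2 g a b f}"
  shows "M \<subseteq> UC_g g a b \<and>
         (\<forall>f\<in>UC_g g a b. \<forall>\<epsilon>>0. \<exists>m\<in>M. \<forall>t\<in>{a..b}. norm (f t - m t) < \<epsilon>)"
proof
  have mono: "mono_on {a..b} g"
    using derivatorD(2)[OF assms(1)] .
  show "M \<subseteq> UC_g g a b"
    using AC_g_subset_UC_g[OF mono] unfolding M_def by blast
  show "\<forall>f\<in>UC_g g a b. \<forall>\<epsilon>>0. \<exists>m\<in>M. \<forall>t\<in>{a..b}. norm (f t - m t) < \<epsilon>"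
  proof (intro ballI allI impI)
    fix f :: "real \<Rightarrow> 'a" and \<epsilon> :: real
    assume "f \<in> UC_g g a b" "\<epsilon> > 0"
    obtain \<Psi> \<Psi>' L where \<Psi>: "\<And>y. (\<Psi> has_vector_derivative \<Psi>' y) (at y)"
      and bound: "\<And>y. norm (\<Psi>' y) \<le> L" and meas: "\<Psi>' \<in> borel_measurable borel"
      and close: "\<And>t. t \<in> {a..b} \<Longrightarrow> norm (f t - \<Psi> (g t)) < \<epsilon>"
      using UC_g_approx_by_smooth_comp[OF mono \<open>f \<in> UC_g g a b\<close> \<open>\<epsilon> > 0\<close>] by blast
    have "(\<lambda>t. \<Psi> (g t)) \<in> M"
      using lipschitz_comp_in_AC_g[OF mono lipschitz_if_vector_derivative_bounded[OF \<Psi> bound]]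
        g_deriv_in_L2_comp[OF assms(1) \<Psi> bound meas]
      by (simp add: M_def)
    then show "\<exists>m\<in>M. \<forall>t\<in>{a..b}. norm (f t - m t) < \<epsilon>"
      using close by (intro bexI[where x="\<lambda>t. \<Psi> (g t)"]) auto
  qed
qed

end
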